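(* Let $T>0$ and let $b^k,b\in L^\infty\cap L^1(\mathbb{R}\times(0,T))$ for all $k\in\mathbb{N}$. Assume (i) there is a function $0\le L\in L^{1/2}([0,T])$ such that $|b^k(\cdot,t)|_{\mathrm{Lip}^+}\le L(t)$ for a.e. $t\in(0,T)$ and all $k\in\mathbb{N}$; (ii) $\lim_{k\to\infty}\|b^k-b\|_{L^\infty((0,T);L^1(\mathbb{R}))}=0$. Then for every $R>0$, $\lim_{k\to\infty}\|d_R(b^k;b)\|_{L^1(0,T)}=0$.
   Context: The one-sided Lipschitz constant is $|c|_{\mathrm{Lip}^+}\coloneqq\sup_{x\ne y}\frac{c(x)-c(y)}{x-y}$. For bounded measurable $b:\mathbb{R}\times(0,T)\to\mathbb{R}$, $K_R[b](x,t)\coloneqq\bigcap_{|N|=0}\overline{\mathrm{conv}}\bigl(b(B_R(x)\setminus N,t)\bigr)$, the closed convex hull of the essential range of $b(\cdot,t)$ over $(x-R,x+R)$, and $d_R(b^k;b)(t)\coloneqq\operatorname{ess\,sup}_{x\in\mathbb{R}}\operatorname{dist}\bigl(b^k(x,t),K_R[b](x,t)\bigr)$. *)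

theory Defs
  imports "HOL-Analysis.Analysis" "HOL-Probability.Essential_Supremum"
begin

definition lip_plus :: "(real \<Rightarrow> real) \<Rightarrow> ereal" where
  "lip_plus c = (SUP p \<in> {(x, y). x \<noteq> y}. ereal ((c (fst p) - c (snd p)) / (fst p - snd p)))"

definition K_R :: "(real \<Rightarrow> real \<Rightarrow> real) \<Rightarrow> real \<Rightarrow> real \<Rightarrow> real \<Rightarrow> real set" where
  "K_R b R x t = (\<Inter> N \<in> null_sets lborel. closure (convex hull ((\<lambda>y. b y t) ` (ball x R - N))))"

definition d_R :: "(real \<Rightarrow> real \<Rightarrow> real) \<Rightarrow> (real \<Rightarrow> real \<Rightarrow> real) \<Rightarrow> real \<Rightarrow> real \<Rightarrow> ereal" where
  "d_R bk b R t = esssup lborel (\<lambda>x. ereal (infdist (bk x t) (K_R b R x t)))"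

end

(*
  Fix t and write f = b(., t), g = b^k(., t), eps = ||g - f||_1 and l = L(t).
  If f stayed a.e. below g(x) - c on B_R(x), the one-sided Lipschitz bound on g would give
  |g - f| >= c/2 on the window (x - h, x), costing c h / 2 of L^1 mass; symmetrically for
  f above g(x) + c on (x, x + h). A window with h <= R, l h <= c/2 and 2 eps < c h exists as
  soon as c > 2 eps / R + 2 sqrt (eps l), so then both {f >= g(x) - c} and {f <= g(x) + c}
  meet B_R(x) in positive measure and K_R[b](x, t) contains a point within c of g(x).
  Hence d_R(b^k; b)(t) <= 2 eps / R + 2 sqrt eps sqrt (L t), and integrating over (0, T),
  with eps -> 0 uniformly in t and sqrt L integrable, gives the claim.

  The essential supremum requires x |-> dist(g(x), K_R[b](x, t)) to be measurable. The values w
  for which both {f <= w} and {f >= w} meet B_R(x) in positive measure lie in K_R[b](x, t),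
  approximate each of its points, and remain such values when x moves slightly; so
  x |-> dist(q, K_R[b](x, t)) is upper semicontinuous for every q.
*)

theory Submission
  imports Defs
begin

section \<open>Essential convex hull\<close>

definition ess_hull :: "(real \<Rightarrow> real) \<Rightarrow> real set \<Rightarrow> real set" where
  "ess_hull f S = (\<Inter>N \<in> null_sets lborel. closure (convex hull (f ` (S - N))))"

lemma K_R_eq_ess_hull: "K_R b R x t = ess_hull (\<lambda>y. b y t) (ball x R)"
  by (simp add: K_R_def ess_hull_def)

definition ess_intermediate :: "(real \<Rightarrow> real) \<Rightarrow> real set \<Rightarrow> real \<Rightarrow> bool" where
  "ess_intermediate f S w \<longleftrightarrow>
     {y \<in> S. f y \<le> w} \<notin> null_sets lborel \<and> {y \<in> S. w \<le> f y} \<notin> null_sets lborel"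

lemma not_null_sets_cover:
  assumes "A \<subseteq> (\<Union>n::nat. B n)" "A \<notin> null_sets M" "A \<in> sets M"
  obtains n where "B n \<notin> null_sets M"
  using assms null_sets_UN null_sets_subset by metis

lemma not_null_sets_mono:
  "A \<notin> null_sets M \<Longrightarrow> A \<subseteq> B \<Longrightarrow> A \<in> sets M \<Longrightarrow> B \<notin> null_sets M"
  using null_sets_subset by blast

lemma ess_intermediate_in_ess_hull:
  assumes [measurable]: "f \<in> borel_measurable borel" "S \<in> sets borel"
    and "ess_intermediate f S w"
  shows "w \<in> ess_hull f S"
  unfolding ess_hull_def
proof
  fix N :: "real set" assume N: "N \<in> null_sets lborel"
  have "{y \<in> S. f y \<le> w} \<in> sets lborel" "{y \<in> S. w \<le> f y} \<in> sets lborel"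
    by simp_all
  then have "\<not> {y \<in> S. f y \<le> w} \<subseteq> N" "\<not> {y \<in> S. w \<le> f y} \<subseteq> N"
    using assms(3) null_sets_subset[OF N] unfolding ess_intermediate_def by blast+
  then obtain y1 y2 where "y1 \<in> S - N" "f y1 \<le> w" "y2 \<in> S - N" "w \<le> f y2"
    by blast
  then have "closed_segment (f y1) (f y2) \<subseteq> convex hull (f ` (S - N))"
    by (intro closed_segment_subset convex_convex_hull hull_inc) auto
  moreover have "w \<in> closed_segment (f y1) (f y2)"
    using \<open>f y1 \<le> w\<close> \<open>w \<le> f y2\<close> by (simp add: closed_segment_eq_real_ivl)
  ultimately show "w \<in> closure (convex hull (f ` (S - N)))"
    using closure_subset by blast
qed

lemma ess_hull_superlevel_not_null_sets:
  assumes "w \<in> ess_hull f S" "w' < w"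
  shows "{y \<in> S. w' \<le> f y} \<notin> null_sets lborel"
proof
  let ?N = "{y \<in> S. w' \<le> f y}"
  assume "?N \<in> null_sets lborel"
  then have "w \<in> closure (convex hull (f ` (S - ?N)))"
    using assms(1) unfolding ess_hull_def by blast
  moreover have "closure (convex hull (f ` (S - ?N))) \<subseteq> {..w'}"
    by (intro closure_minimal hull_minimal) auto
  ultimately show False
    using assms(2) by auto
qed

lemma ess_hull_sublevel_not_null_sets:
  assumes "w \<in> ess_hull f S" "w < w'"
  shows "{y \<in> S. f y \<le> w'} \<notin> null_sets lborel"
proof
  let ?N = "{y \<in> S. f y \<le> w'}"
  assume "?N \<in> null_sets lborel"
  then have "w \<in> closure (convex hull (f ` (S - ?N)))"
    using assms(1) unfolding ess_hull_def by blast
  moreover have "closure (convex hull (f ` (S - ?N))) \<subseteq> {w'..}"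
    by (intro closure_minimal hull_minimal) auto
  ultimately show False
    using assms(2) by auto
qed

lemma sublevel_below_not_null_setsE:
  fixes f :: "real \<Rightarrow> real"
  assumes [measurable]: "f \<in> borel_measurable borel" "S \<in> sets borel"
    and "S \<notin> null_sets lborel" "{y \<in> S. w \<le> f y} \<in> null_sets lborel"
  obtains w' where "w' < w" "{y \<in> S. f y \<le> w'} \<notin> null_sets lborel"
proof -
  have strict: "{y \<in> S. f y < w} \<notin> null_sets lborel"
  proof
    assume "{y \<in> S. f y < w} \<in> null_sets lborel"
    from null_sets.Un[OF this assms(4)] have "S \<in> null_sets lborel"
      by (rule back_subst) auto
    with assms(3) show False ..
  qed
  have "{y \<in> S. f y < w} \<subseteq> (\<Union>n. {y \<in> S. f y \<le> w - inverse (Suc n)})"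
  proof
    fix y assume y: "y \<in> {y \<in> S. f y < w}"
    then obtain n where "inverse (Suc n) < w - f y"
      using reals_Archimedean[of "w - f y"] by auto
    with y show "y \<in> (\<Union>n. {y \<in> S. f y \<le> w - inverse (Suc n)})"
      by (intro UN_I[of n]) auto
  qed
  then obtain n where "{y \<in> S. f y \<le> w - inverse (Suc n)} \<notin> null_sets lborel"
    using strict by (rule not_null_sets_cover) simp
  then show thesis
    by (rule that[rotated]) simp
qed

lemma superlevel_above_not_null_setsE:
  fixes f :: "real \<Rightarrow> real"
  assumes [measurable]: "f \<in> borel_measurable borel" "S \<in> sets borel"
    and "S \<notin> null_sets lborel" "{y \<in> S. f y \<le> w} \<in> null_sets lborel"
  obtains w' where "w < w'" "{y \<in> S. w' \<le> f y} \<notin> null_sets lborel"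
proof -
  have "{y \<in> S. - w \<le> - f y} \<in> null_sets lborel"
    using assms(4) by simp
  then obtain w' where "w' < - w" "{y \<in> S. - f y \<le> w'} \<notin> null_sets lborel"
    by (rule sublevel_below_not_null_setsE[rotated 3]) (simp_all add: assms(3))
  moreover have "{y \<in> S. - f y \<le> w'} = {y \<in> S. - w' \<le> f y}"
    by auto
  ultimately show thesis
    by (intro that[of "- w'"]) simp_all
qed

lemma sublevel_null_threshold:
  fixes f :: "real \<Rightarrow> real"
  assumes [measurable]: "f \<in> borel_measurable borel" "S \<in> sets borel"
    and "w1 \<le> w2" "{y \<in> S. f y \<le> w2} \<notin> null_sets lborel"
  obtains ws where "w1 \<le> ws" "ws \<le> w2"
    "\<And>w. w1 \<le> w \<Longrightarrow> w < ws \<Longrightarrow> {y \<in> S. f y \<le> w} \<in> null_sets lborel"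
    "\<And>w. ws < w \<Longrightarrow> {y \<in> S. f y \<le> w} \<notin> null_sets lborel"
proof
  define W where "W = {w \<in> {w1..w2}. {y \<in> S. f y \<le> w} \<notin> null_sets lborel}"
  have "w2 \<in> W" "bdd_below W"
    using assms(3,4) by (auto simp: W_def intro: bdd_belowI[of _ w1])
  then show "w1 \<le> Inf W" "Inf W \<le> w2"
    by (auto simp: W_def intro: cInf_greatest cInf_lower)
  show "{y \<in> S. f y \<le> w} \<in> null_sets lborel" if "w1 \<le> w" "w < Inf W" for w
  proof (rule ccontr)
    assume "{y \<in> S. f y \<le> w} \<notin> null_sets lborel"
    with that \<open>Inf W \<le> w2\<close> have "w \<in> W"
      by (simp add: W_def)
    with \<open>bdd_below W\<close> \<open>w < Inf W\<close> show False
      using cInf_lower not_le by blast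
  qed
  show "{y \<in> S. f y \<le> w} \<notin> null_sets lborel" if "Inf W < w" for w
  proof -
    obtain s where "s \<in> W" "s < w"
      using \<open>w2 \<in> W\<close> \<open>bdd_below W\<close> \<open>Inf W < w\<close> by (metis cInf_less_iff empty_iff)
    then have "{y \<in> S. f y \<le> s} \<notin> null_sets lborel"
      by (simp add: W_def)
    then show ?thesis
      by (rule not_null_sets_mono) (use \<open>s < w\<close> in auto)
  qed
qed

lemma ess_intermediate_between:
  fixes f :: "real \<Rightarrow> real"
  assumes [measurable]: "f \<in> borel_measurable borel" "S \<in> sets borel"
    and "w1 \<le> w2"
    and super: "{y \<in> S. w1 \<le> f y} \<notin> null_sets lborel"
    and sub: "{y \<in> S. f y \<le> w2} \<notin> null_sets lborel"
  obtains w where "w \<in> {w1..w2}" "ess_intermediate f S w"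
proof -
  obtain ws where ws: "w1 \<le> ws" "ws \<le> w2"
    and below: "\<And>w. w1 \<le> w \<Longrightarrow> w < ws \<Longrightarrow> {y \<in> S. f y \<le> w} \<in> null_sets lborel"
    and above: "\<And>w. ws < w \<Longrightarrow> {y \<in> S. f y \<le> w} \<notin> null_sets lborel"
    by (rule sublevel_null_threshold[OF assms(1-3) sub]) blast
  have S_not_null: "S \<notin> null_sets lborel"
    by (rule not_null_sets_mono[OF super]) auto
  show thesis
  proof (cases "{y \<in> S. f y \<le> ws} \<in> null_sets lborel")
    case False
    have "{y \<in> S. ws \<le> f y} \<notin> null_sets lborel"
    proof
      assume super_null: "{y \<in> S. ws \<le> f y} \<in> null_sets lborel"
      then obtain w' where "w' < ws" and sub': "{y \<in> S. f y \<le> w'} \<notin> null_sets lborel"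
        by (rule sublevel_below_not_null_setsE[OF assms(1,2) S_not_null])
      have "{y \<in> S. f y \<le> max w1 w'} \<notin> null_sets lborel"
        using sub' by (rule not_null_sets_mono) auto
      moreover have "w1 \<noteq> ws"
        using super super_null by auto
      ultimately show False
        using below[of "max w1 w'"] ws(1) \<open>w' < ws\<close> by simp
    qed
    with False ws show thesis
      by (intro that[of ws]) (auto simp: ess_intermediate_def)
  next
    case True
    then obtain w' where "ws < w'" and super': "{y \<in> S. w' \<le> f y} \<notin> null_sets lborel"
      by (rule superlevel_above_not_null_setsE[OF assms(1,2) S_not_null])
    have "ws \<noteq> w2"
      using True sub by auto
    then have "ws < min w' w2"
      using ws(2) \<open>ws < w'\<close> by simp
    then have "{y \<in> S. f y \<le> min w' w2} \<notin> null_sets lborel"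
      by (rule above)
    moreover have "{y \<in> S. min w' w2 \<le> f y} \<notin> null_sets lborel"
      using super' by (rule not_null_sets_mono) auto
    ultimately show thesis
      using ws \<open>ws < min w' w2\<close>
      by (intro that[of "min w' w2"]) (auto simp: ess_intermediate_def)
  qed
qed

lemma ess_intermediate_exists:
  fixes f :: "real \<Rightarrow> real"
  assumes [measurable]: "f \<in> borel_measurable borel" "S \<in> sets borel"
    and "S \<notin> null_sets lborel"
  obtains w where "ess_intermediate f S w"
proof -
  have "S \<subseteq> (\<Union>n. {y \<in> S. \<bar>f y\<bar> \<le> real n})"
    by (auto intro: real_arch_simple)
  then obtain n where bounded: "{y \<in> S. \<bar>f y\<bar> \<le> real n} \<notin> null_sets lborel"
    using assms(3) by (rule not_null_sets_cover) simp
  have super: "{y \<in> S. - real n \<le> f y} \<notin> null_sets lborel"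
    and sub: "{y \<in> S. f y \<le> real n} \<notin> null_sets lborel"
    using bounded by (rule not_null_sets_mono; force)+
  show thesis
    by (rule ess_intermediate_between[OF assms(1,2) _ super sub]) (auto intro: that)
qed

lemma ess_intermediate_near_ess_hull:
  fixes f :: "real \<Rightarrow> real"
  assumes [measurable]: "f \<in> borel_measurable borel" "S \<in> sets borel"
    and "w \<in> ess_hull f S" "r > 0"
  obtains w' where "ess_intermediate f S w'" "\<bar>w - w'\<bar> \<le> r"
proof -
  have super: "{y \<in> S. w - r \<le> f y} \<notin> null_sets lborel"
    and sub: "{y \<in> S. f y \<le> w + r} \<notin> null_sets lborel"
    using assms(4) ess_hull_superlevel_not_null_sets[OF assms(3)]
      ess_hull_sublevel_not_null_sets[OF assms(3)]
    by simp_all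
  show thesis
    by (rule ess_intermediate_between[OF assms(1,2) _ super sub])
      (use assms(4) in \<open>auto intro!: that\<close>)
qed

section \<open>Dependence on the centre of the ball\<close>

lemma ball_not_null_sets:
  fixes x :: real
  shows "R > 0 \<Longrightarrow> ball x R \<notin> null_sets lborel"
  by (auto simp: ball_eq_greaterThanLessThan null_sets_def)

lemma eventually_not_null_sets_ball_Int:
  fixes x :: "'a::euclidean_space"
  assumes "E \<in> sets lborel" "ball x R \<inter> E \<notin> null_sets lborel"
  shows "\<forall>\<^sub>F x' in nhds x. ball x' R \<inter> E \<notin> null_sets lborel"
proof -
  have "ball x R \<inter> E \<subseteq> (\<Union>n. ball x (R - inverse (Suc n)) \<inter> E)"
  proof
    fix y assume y: "y \<in> ball x R \<inter> E"
    then obtain n where "inverse (Suc n) < R - dist x y"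
      using reals_Archimedean[of "R - dist x y"] by auto
    with y show "y \<in> (\<Union>n. ball x (R - inverse (Suc n)) \<inter> E)"
      by (intro UN_I[of n]) auto
  qed
  then obtain n where inner: "ball x (R - inverse (Suc n)) \<inter> E \<notin> null_sets lborel"
    using assms(2) by (rule not_null_sets_cover) (use assms(1) in simp)
  have "ball x' R \<inter> E \<notin> null_sets lborel" if "dist x' x < inverse (Suc n)" for x'
  proof (rule not_null_sets_mono[OF inner])
    show "ball x (R - inverse (Suc n)) \<inter> E \<subseteq> ball x' R \<inter> E"
      using that by (auto; metric)
  qed (use assms(1) in simp)
  then show ?thesis
    unfolding eventually_nhds_metric by (intro exI[of _ "inverse (Suc n)"]) auto
qed

lemma eventually_ess_intermediate_ball:
  fixes f :: "real \<Rightarrow> real"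
  assumes [measurable]: "f \<in> borel_measurable borel" and "ess_intermediate f (ball x R) w"
  shows "\<forall>\<^sub>F x' in nhds x. ess_intermediate f (ball x' R) w"
proof -
  have sets: "{y. f y \<le> w} \<in> sets lborel" "{y. w \<le> f y} \<in> sets lborel"
    by simp_all
  have "{y \<in> ball z R. f y \<le> w} = ball z R \<inter> {y. f y \<le> w}"
    "{y \<in> ball z R. w \<le> f y} = ball z R \<inter> {y. w \<le> f y}" for z
    by auto
  with assms(2) eventually_not_null_sets_ball_Int[OF sets(1)] eventually_not_null_sets_ball_Int[OF sets(2)]
  show ?thesis
    unfolding ess_intermediate_def by (simp add: eventually_conj_iff)
qed

lemma eventually_infdist_ess_hull_ball_less:
  fixes f :: "real \<Rightarrow> real"
  assumes [measurable]: "f \<in> borel_measurable borel" and "R > 0"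
    and "infdist q (ess_hull f (ball x R)) < a"
  shows "\<forall>\<^sub>F x' in nhds x. infdist q (ess_hull f (ball x' R)) < a"
proof -
  obtain w0 where "ess_intermediate f (ball x R) w0"
    by (rule ess_intermediate_exists[OF assms(1) _ ball_not_null_sets[OF \<open>R > 0\<close>]]) simp
  then have "w0 \<in> ess_hull f (ball x R)"
    by (rule ess_intermediate_in_ess_hull[OF assms(1), rotated]) simp
  then have "ess_hull f (ball x R) \<noteq> {}"
    by blast
  then obtain k where k: "k \<in> ess_hull f (ball x R)" "dist q k < a"
    using assms(3) unfolding infdist_notempty[OF \<open>_ \<noteq> {}\<close>]
    by (metis (no_types, lifting) bdd_below_image_dist cINF_less_iff)
  define r where "r = (a - dist q k) / 2"
  have "r > 0"
    using k(2) by (simp add: r_def)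
  obtain w where w: "ess_intermediate f (ball x R) w" "\<bar>k - w\<bar> \<le> r"
    by (rule ess_intermediate_near_ess_hull[OF assms(1) _ k(1) \<open>r > 0\<close>]) simp
  have "dist q w < a"
    using dist_triangle[of q w k] w(2) k(2) by (simp add: r_def dist_real_def)
  from eventually_ess_intermediate_ball[OF assms(1) w(1)] show ?thesis
  proof eventually_elim
    case (elim x')
    then have "w \<in> ess_hull f (ball x' R)"
      by (rule ess_intermediate_in_ess_hull[OF assms(1), rotated]) simp
    then have "infdist q (ess_hull f (ball x' R)) \<le> dist q w"
      by (rule infdist_le)
    with \<open>dist q w < a\<close> show ?case
      by linarith
  qed
qed

lemma infdist_eq_INF_Rats:
  fixes x :: real
  shows "infdist x A = (INF p\<in>\<rat>. infdist p A + dist x p)"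
proof (rule antisym)
  show "infdist x A \<le> (INF p\<in>\<rat>. infdist p A + dist x p)"
    by (intro cINF_greatest) (auto simp: infdist_triangle intro!: exI[of _ 0])
  show "(INF p\<in>\<rat>. infdist p A + dist x p) \<le> infdist x A"
  proof (rule field_le_epsilon)
    fix e :: real assume "e > 0"
    then obtain p where "p \<in> \<rat>" "x - e / 2 < p" "p < x + e / 2"
      using Rats_dense_in_real[of "x - e / 2" "x + e / 2"] by auto
    then have "dist x p \<le> e / 2"
      by (auto simp: dist_real_def abs_if)
    have "(INF p\<in>\<rat>. infdist p A + dist x p) \<le> infdist p A + dist x p"
      using \<open>p \<in> \<rat>\<close> by (intro cINF_lower bdd_belowI2[of _ 0]) (auto intro: add_nonneg_nonneg infdist_nonneg)
    also have "\<dots> \<le> infdist x A + 2 * dist x p"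
      using infdist_triangle[of p A x] by (simp add: dist_commute)
    also have "\<dots> \<le> infdist x A + e"
      using \<open>dist x p \<le> e / 2\<close> by simp
    finally show "(INF p\<in>\<rat>. infdist p A + dist x p) \<le> infdist x A + e" .
  qed
qed

lemma borel_measurable_infdist_ess_hull_ball:
  fixes f h :: "real \<Rightarrow> real"
  assumes [measurable]: "f \<in> borel_measurable borel" "h \<in> borel_measurable borel"
    and "R > 0"
  shows "(\<lambda>x. infdist (h x) (ess_hull f (ball x R))) \<in> borel_measurable borel"
proof -
  have [measurable]: "(\<lambda>x. infdist p (ess_hull f (ball x R))) \<in> borel_measurable borel" for p
    unfolding borel_measurable_iff_less
  proof
    fix a
    have "open {x. infdist p (ess_hull f (ball x R)) < a}"
    proof (subst open_subopen, intro ballI)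
      fix x assume "x \<in> {x. infdist p (ess_hull f (ball x R)) < a}"
      then have "\<forall>\<^sub>F x' in nhds x. infdist p (ess_hull f (ball x' R)) < a"
        using eventually_infdist_ess_hull_ball_less[OF assms(1,3)] by simp
      then show "\<exists>T. open T \<and> x \<in> T \<and> T \<subseteq> {x. infdist p (ess_hull f (ball x R)) < a}"
        unfolding eventually_nhds by auto
    qed
    then show "{x \<in> space borel. infdist p (ess_hull f (ball x R)) < a} \<in> sets borel"
      by simp
  qed
  show ?thesis
    unfolding infdist_eq_INF_Rats[of "h _"]
    by (intro borel_measurable_cINF_real countable_rat; measurable)
qed

section \<open>Estimate for a fixed time\<close>

lemma lip_plus_leD:
  assumes "lip_plus c \<le> ereal L" "y < x"
  shows "c x - c y \<le> L * (x - y)"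
proof -
  have "ereal ((c x - c y) / (x - y)) \<le> lip_plus c"
    unfolding lip_plus_def using \<open>y < x\<close> by (intro SUP_upper2[of "(x, y)"]) auto
  also note assms(1)
  finally have "(c x - c y) / (x - y) \<le> L"
    by simp
  with \<open>y < x\<close> show ?thesis
    by (simp add: divide_le_eq mult.commute)
qed

lemma interval_lower_bound_le_nn_integral:
  fixes u :: "real \<Rightarrow> real"
  assumes "AE y in lborel. y \<in> {a<..<b} \<longrightarrow> d \<le> \<bar>u y\<bar>"
    and "(\<integral>\<^sup>+ y. ennreal \<bar>u y\<bar> \<partial>lborel) \<le> ennreal \<epsilon>" "0 \<le> \<epsilon>" "0 \<le> d" "a \<le> b"
  shows "d * (b - a) \<le> \<epsilon>"
proof -
  have "ennreal (d * (b - a)) = (\<integral>\<^sup>+ y. ennreal d * indicator {a<..<b} y \<partial>lborel)"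
    using assms(4,5) by (simp add: nn_integral_cmult_indicator ennreal_mult)
  also have "\<dots> \<le> (\<integral>\<^sup>+ y. ennreal \<bar>u y\<bar> \<partial>lborel)"
    using assms(1) by (intro nn_integral_mono_AE) (auto split: split_indicator intro: ennreal_leI)
  also note assms(2)
  finally show ?thesis
    using assms(3) by simp
qed

lemma superlevel_not_null_sets_if_L1_close:
  fixes f g :: "real \<Rightarrow> real"
  assumes slope: "\<And>x y. y < x \<Longrightarrow> g x - g y \<le> L * (x - y)" and "0 \<le> L"
    and L1: "(\<integral>\<^sup>+ y. ennreal \<bar>g y - f y\<bar> \<partial>lborel) \<le> ennreal \<epsilon>" "0 \<le> \<epsilon>"
    and window: "0 < h" "h \<le> R" "L * h \<le> c / 2" "2 * \<epsilon> < c * h"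
  shows "{y \<in> ball x R. g x - c \<le> f y} \<notin> null_sets lborel"
proof
  assume "{y \<in> ball x R. g x - c \<le> f y} \<in> null_sets lborel"
  then have "AE y in lborel. y \<in> ball x R \<longrightarrow> f y < g x - c"
    by (rule AE_I') auto
  then have "AE y in lborel. y \<in> {x - h<..<x} \<longrightarrow> c / 2 \<le> \<bar>g y - f y\<bar>"
  proof eventually_elim
    case (elim y)
    show ?case
    proof
      assume y: "y \<in> {x - h<..<x}"
      then have "g x - g y \<le> L * h"
        using slope[of y x] mult_left_mono[of "x - y" h L] \<open>0 \<le> L\<close> by simp
      moreover have "f y < g x - c"
        using elim y \<open>h \<le> R\<close> by (simp add: dist_real_def)
      ultimately show "c / 2 \<le> \<bar>g y - f y\<bar>"
        using \<open>L * h \<le> c / 2\<close> by linarith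
    qed
  qed
  then have "c / 2 * (x - (x - h)) \<le> \<epsilon>"
    by (rule interval_lower_bound_le_nn_integral[OF _ L1])
      (use window mult_nonneg_nonneg[OF \<open>0 \<le> L\<close>, of h] in linarith)+
  with \<open>2 * \<epsilon> < c * h\<close> show False
    by simp
qed

lemma sublevel_not_null_sets_if_L1_close:
  fixes f g :: "real \<Rightarrow> real"
  assumes slope: "\<And>x y. y < x \<Longrightarrow> g x - g y \<le> L * (x - y)" and "0 \<le> L"
    and L1: "(\<integral>\<^sup>+ y. ennreal \<bar>g y - f y\<bar> \<partial>lborel) \<le> ennreal \<epsilon>" "0 \<le> \<epsilon>"
    and window: "0 < h" "h \<le> R" "L * h \<le> c / 2" "2 * \<epsilon> < c * h"
  shows "{y \<in> ball x R. f y \<le> g x + c} \<notin> null_sets lborel"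
proof
  assume "{y \<in> ball x R. f y \<le> g x + c} \<in> null_sets lborel"
  then have "AE y in lborel. y \<in> ball x R \<longrightarrow> g x + c < f y"
    by (rule AE_I') auto
  then have "AE y in lborel. y \<in> {x<..<x + h} \<longrightarrow> c / 2 \<le> \<bar>g y - f y\<bar>"
  proof eventually_elim
    case (elim y)
    show ?case
    proof
      assume y: "y \<in> {x<..<x + h}"
      then have "g y - g x \<le> L * h"
        using slope[of x y] mult_left_mono[of "y - x" h L] \<open>0 \<le> L\<close> by simp
      moreover have "g x + c < f y"
        using elim y \<open>h \<le> R\<close> by (simp add: dist_real_def)
      ultimately show "c / 2 \<le> \<bar>g y - f y\<bar>"
        using \<open>L * h \<le> c / 2\<close> by linarith
    qed
  qed
  then have "c / 2 * (x + h - x) \<le> \<epsilon>"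
    by (rule interval_lower_bound_le_nn_integral[OF _ L1])
      (use window mult_nonneg_nonneg[OF \<open>0 \<le> L\<close>, of h] in linarith)+
  with \<open>2 * \<epsilon> < c * h\<close> show False
    by simp
qed

lemma exists_window:
  fixes \<epsilon> L R c :: real
  assumes "0 \<le> \<epsilon>" "0 \<le> L" "0 < R" "2 * \<epsilon> / R + 2 * sqrt (\<epsilon> * L) < c"
  obtains h where "0 < h" "h \<le> R" "L * h \<le> c / 2" "2 * \<epsilon> < c * h"
proof -
  have "0 \<le> 2 * \<epsilon> / R" "0 \<le> 2 * sqrt (\<epsilon> * L)"
    using assms(1-3) by simp_all
  with assms(4) have "2 * \<epsilon> / R < c" "2 * sqrt (\<epsilon> * L) < c" "0 < c"
    by linarith+
  then have "2 * \<epsilon> < c * R"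
    using assms(3) by (simp add: divide_less_eq)
  show thesis
  proof (cases "L * R \<le> c / 2")
    case True
    with \<open>0 < R\<close> \<open>2 * \<epsilon> < c * R\<close> show thesis
      by (intro that[of R]) simp_all
  next
    case False
    then have "0 < L"
      using assms(2,3) \<open>0 < c\<close> by (cases "L = 0") simp_all
    have "(2 * sqrt (\<epsilon> * L))\<^sup>2 < c\<^sup>2"
      using \<open>2 * sqrt (\<epsilon> * L) < c\<close> \<open>0 \<le> 2 * sqrt (\<epsilon> * L)\<close> by (rule power_strict_mono) simp
    then have "4 * \<epsilon> * L < c\<^sup>2"
      using assms(1,2) by (simp add: power_mult_distrib)
    then have "2 * \<epsilon> < c * (c / (2 * L))"
      using \<open>0 < L\<close> by (simp add: power2_eq_square field_simps)
    moreover have "c / (2 * L) \<le> R"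
      using False \<open>0 < L\<close> by (simp add: divide_le_eq algebra_simps)
    ultimately show thesis
      using \<open>0 < c\<close> \<open>0 < L\<close> by (intro that[of "c / (2 * L)"]) simp_all
  qed
qed

lemma infdist_ess_hull_ball_le:
  fixes f g :: "real \<Rightarrow> real"
  assumes [measurable]: "f \<in> borel_measurable borel" and "0 < R"
    and slope: "\<And>x y. y < x \<Longrightarrow> g x - g y \<le> L * (x - y)" and "0 \<le> L"
    and L1: "(\<integral>\<^sup>+ y. ennreal \<bar>g y - f y\<bar> \<partial>lborel) \<le> ennreal \<epsilon>" "0 \<le> \<epsilon>"
  shows "infdist (g x) (ess_hull f (ball x R)) \<le> 2 * \<epsilon> / R + 2 * sqrt (\<epsilon> * L)"
proof (rule dense_ge)
  fix c assume "2 * \<epsilon> / R + 2 * sqrt (\<epsilon> * L) < c"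
  then obtain h where window: "0 < h" "h \<le> R" "L * h \<le> c / 2" "2 * \<epsilon> < c * h"
    using exists_window \<open>0 \<le> \<epsilon>\<close> \<open>0 \<le> L\<close> \<open>0 < R\<close> by blast
  then have "0 \<le> c"
    using mult_nonneg_nonneg[OF \<open>0 \<le> L\<close>, of h] by linarith
  have super: "{y \<in> ball x R. g x - c \<le> f y} \<notin> null_sets lborel"
    by (rule superlevel_not_null_sets_if_L1_close[OF slope \<open>0 \<le> L\<close> L1 window])
  have sub: "{y \<in> ball x R. f y \<le> g x + c} \<notin> null_sets lborel"
    by (rule sublevel_not_null_sets_if_L1_close[OF slope \<open>0 \<le> L\<close> L1 window])
  obtain w where "w \<in> {g x - c..g x + c}" "ess_intermediate f (ball x R) w"
    by (rule ess_intermediate_between[OF assms(1) _ _ super sub]) (use \<open>0 \<le> c\<close> in simp_all)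
  then have "w \<in> ess_hull f (ball x R)" "dist (g x) w \<le> c"
    by (auto simp: dist_real_def intro: ess_intermediate_in_ess_hull[OF assms(1), rotated])
  then show "infdist (g x) (ess_hull f (ball x R)) \<le> c"
    by (rule infdist_le2)
qed

lemma d_R_le:
  assumes [measurable]: "(\<lambda>y. b y t) \<in> borel_measurable borel" "(\<lambda>y. bk y t) \<in> borel_measurable borel"
    and "0 < R" "0 \<le> L" "lip_plus (\<lambda>x. bk x t) \<le> ereal L"
    and "(\<integral>\<^sup>+ x. ennreal \<bar>bk x t - b x t\<bar> \<partial>lborel) \<le> ennreal \<epsilon>" "0 \<le> \<epsilon>"
  shows "d_R bk b R t \<le> ereal (2 * \<epsilon> / R + 2 * sqrt (\<epsilon> * L))"
  unfolding d_R_def K_R_eq_ess_hull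
proof (rule esssup_I)
  show "(\<lambda>x. ereal (infdist (bk x t) (ess_hull (\<lambda>y. b y t) (ball x R)))) \<in> borel_measurable lborel"
    using borel_measurable_infdist_ess_hull_ball[OF assms(1,2,3)] by simp
  show "AE x in lborel. ereal (infdist (bk x t) (ess_hull (\<lambda>y. b y t) (ball x R)))
      \<le> ereal (2 * \<epsilon> / R + 2 * sqrt (\<epsilon> * L))"
    using infdist_ess_hull_ball_le[OF assms(1,3) lip_plus_leD[OF assms(5)] assms(4,6,7)] by simp
qed

section \<open>Integration in time\<close>

lemma borel_measurable_section:
  fixes b :: "real \<Rightarrow> real \<Rightarrow> real"
  assumes "set_integrable (lborel :: (real \<times> real) measure) (UNIV \<times> A) (\<lambda>p. b (fst p) (snd p))"
    and "t \<in> A"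
  shows "(\<lambda>y. b y t) \<in> borel_measurable borel"
proof -
  have pair: "(\<lambda>y. (y, t)) \<in> borel_measurable borel"
    by (rule borel_measurable_continuous_onI) (intro continuous_intros)
  have product: "(\<lambda>p. indicator (UNIV \<times> A) p *\<^sub>R b (fst p) (snd p)) \<in> borel_measurable borel"
    using borel_measurable_integrable[OF assms(1)[unfolded set_integrable_def]] by simp
  have "(\<lambda>y. indicator (UNIV \<times> A) (y, t) *\<^sub>R b y t) \<in> borel_measurable borel"
    using measurable_compose[OF pair product] by simp
  with \<open>t \<in> A\<close> show ?thesis
    by simp
qed

lemma esssup_tendsto_0_AE_le:
  fixes F :: "nat \<Rightarrow> 'a \<Rightarrow> ennreal"
  assumes "(\<lambda>k. esssup M (\<lambda>t. enn2ereal (F k t))) \<longlonglongrightarrow> 0"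
  obtains \<epsilon> where "\<epsilon> \<longlonglongrightarrow> 0" "\<And>k. 0 \<le> \<epsilon> k"
    "\<forall>\<^sub>F k in sequentially. AE t in M. F k t \<le> ennreal (\<epsilon> k)"
proof
  define E where "E = (\<lambda>k. esssup M (\<lambda>t. enn2ereal (F k t)))"
  have "E \<longlonglongrightarrow> ereal 0"
    using assms by (simp add: E_def zero_ereal_def)
  then have "(\<lambda>k. max 0 (real_of_ereal (E k))) \<longlonglongrightarrow> max 0 0"
    by (intro tendsto_max tendsto_const lim_real_of_ereal)
  then show "(\<lambda>k. max 0 (real_of_ereal (E k))) \<longlonglongrightarrow> 0"
    by simp
  show "0 \<le> max 0 (real_of_ereal (E k))" for k
    by simp
  have "\<forall>\<^sub>F k in sequentially. E k < \<infinity>"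
    using \<open>E \<longlonglongrightarrow> ereal 0\<close> by (rule order_tendstoD) simp
  then show "\<forall>\<^sub>F k in sequentially. AE t in M. F k t \<le> ennreal (max 0 (real_of_ereal (E k)))"
  proof eventually_elim
    case (elim k)
    then have bound: "E k \<le> ereal (max 0 (real_of_ereal (E k)))"
      by (cases "E k") auto
    from esssup_AE[of "\<lambda>t. enn2ereal (F k t)" M] show ?case
    proof eventually_elim
      case (elim t)
      then have "enn2ereal (F k t) \<le> ereal (max 0 (real_of_ereal (E k)))"
        using bound unfolding E_def by (rule order_trans)
      then show ?case
        by (simp add: less_eq_ennreal.rep_eq)
    qed
  qed
qed

lemma set_nn_integral_affine_tendsto_0:
  fixes a c :: "nat \<Rightarrow> real" and g :: "'a \<Rightarrow> real"
  assumes "a \<longlonglongrightarrow> 0" "c \<longlonglongrightarrow> 0" "\<And>k. 0 \<le> a k" "\<And>k. 0 \<le> c k"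
    and "A \<in> sets M" "emeasure M A < \<infinity>" "set_integrable M A g" "\<And>t. t \<in> A \<Longrightarrow> 0 \<le> g t"
  shows "(\<lambda>k. \<integral>\<^sup>+ t \<in> A. ennreal (a k + c k * g t) \<partial>M) \<longlonglongrightarrow> 0"
proof -
  have indicator_g: "ennreal (g t) * indicator A t = ennreal (indicator A t *\<^sub>R g t)" for t
    by (simp split: split_indicator)
  have "(\<lambda>t. ennreal (g t) * indicator A t) \<in> borel_measurable M"
    using assms(7) unfolding indicator_g set_integrable_def by simp
  moreover have G_finite: "(\<integral>\<^sup>+ t \<in> A. ennreal (g t) \<partial>M) < \<infinity>"
    using integrableD(2)[OF assms(7)[unfolded set_integrable_def]]
    by (simp add: indicator_g less_top)
  moreover have "ennreal (a k + c k * g t) * indicator A t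
      = ennreal (a k) * indicator A t + ennreal (c k) * (ennreal (g t) * indicator A t)" for k t
    using assms(3,4,8) by (auto simp: ennreal_plus ennreal_mult split: split_indicator)
  ultimately have "(\<integral>\<^sup>+ t \<in> A. ennreal (a k + c k * g t) \<partial>M)
      = emeasure M A * ennreal (a k) + (\<integral>\<^sup>+ t \<in> A. ennreal (g t) \<partial>M) * ennreal (c k)" for k
    using assms(5) by (simp add: nn_integral_add nn_integral_cmult mult.commute)
  moreover have "(\<lambda>k. emeasure M A * ennreal (a k) + (\<integral>\<^sup>+ t \<in> A. ennreal (g t) \<partial>M) * ennreal (c k))
      \<longlonglongrightarrow> emeasure M A * ennreal 0 + (\<integral>\<^sup>+ t \<in> A. ennreal (g t) \<partial>M) * ennreal 0"
    using assms(1,2,6) G_finite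
    by (intro tendsto_add ennreal_tendsto_cmult tendsto_ennrealI) (simp_all add: infinity_ennreal_def)
  ultimately show ?thesis
    by simp
qed

lemma AE_d_R_le:
  fixes bk b :: "real \<Rightarrow> real \<Rightarrow> real"
  assumes bk_L1: "set_integrable (lborel :: (real \<times> real) measure) (UNIV \<times> A) (\<lambda>p. bk (fst p) (snd p))"
    and b_L1: "set_integrable (lborel :: (real \<times> real) measure) (UNIV \<times> A) (\<lambda>p. b (fst p) (snd p))"
    and "\<And>t. t \<in> A \<Longrightarrow> 0 \<le> L t"
    and "AE t in lborel. t \<in> A \<longrightarrow> lip_plus (\<lambda>x. bk x t) \<le> ereal (L t)"
    and "AE t in lborel. t \<in> A \<longrightarrow> (\<integral>\<^sup>+ x. ennreal \<bar>bk x t - b x t\<bar> \<partial>lborel) \<le> ennreal \<epsilon>"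
    and "0 < R" "0 \<le> \<epsilon>"
  shows "AE t in lborel. t \<in> A \<longrightarrow> d_R bk b R t \<le> ereal (2 * \<epsilon> / R + 2 * sqrt \<epsilon> * sqrt (L t))"
  using assms(4,5)
proof eventually_elim
  case (elim t)
  show ?case
  proof
    assume t: "t \<in> A"
    have "d_R bk b R t \<le> ereal (2 * \<epsilon> / R + 2 * sqrt (\<epsilon> * L t))"
      by (rule d_R_le[where b=b and bk=bk and t=t,
            OF borel_measurable_section[OF b_L1 t] borel_measurable_section[OF bk_L1 t]])
        (use assms(3,6,7) elim t in auto)
    then show "d_R bk b R t \<le> ereal (2 * \<epsilon> / R + 2 * sqrt \<epsilon> * sqrt (L t))"
      by (simp add: real_sqrt_mult mult.assoc)
  qed
qed

theorem lemma5p1: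
  fixes T :: real
    and bk :: "nat \<Rightarrow> real \<Rightarrow> real \<Rightarrow> real"
    and b :: "real \<Rightarrow> real \<Rightarrow> real"
    and L :: "real \<Rightarrow> real"
  assumes T_pos: "T > 0"
    and bk_L1: "\<And>k. set_integrable (lborel :: (real \<times> real) measure) (UNIV \<times> {0<..<T})
                        (\<lambda>p. bk k (fst p) (snd p))"
    and bk_Linf: "\<And>k. \<exists>C. AE p in (lborel :: (real \<times> real) measure).
                        p \<in> UNIV \<times> {0<..<T} \<longrightarrow> \<bar>bk k (fst p) (snd p)\<bar> \<le> C"
    and b_L1: "set_integrable (lborel :: (real \<times> real) measure) (UNIV \<times> {0<..<T})
                        (\<lambda>p. b (fst p) (snd p))"
    and b_Linf: "\<exists>C. AE p in (lborel :: (real \<times> real) measure).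
                        p \<in> UNIV \<times> {0<..<T} \<longrightarrow> \<bar>b (fst p) (snd p)\<bar> \<le> C"
    and L_meas: "set_borel_measurable lborel {0..T} L"
    and L_nonneg: "\<forall>t\<in>{0..T}. 0 \<le> L t"
    and L_half: "set_integrable lborel {0..T} (\<lambda>t. sqrt (L t))"
    and lip: "AE t in lborel. t \<in> {0<..<T} \<longrightarrow> (\<forall>k. lip_plus (\<lambda>x. bk k x t) \<le> ereal (L t))"
    and conv: "(\<lambda>k. esssup (restrict_space lborel {0<..<T})
                   (\<lambda>t. enn2ereal (\<integral>\<^sup>+ x. ennreal \<bar>bk k x t - b x t\<bar> \<partial>lborel)))
               \<longlonglongrightarrow> 0"
  shows "\<forall>R>0. (\<lambda>k. \<integral>\<^sup>+ t \<in> {0<..<T}. e2ennreal (d_R (bk k) b R t) \<partial>lborel) \<longlonglongrightarrow> 0"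
proof (intro allI impI)
  fix R :: real assume "0 < R"
  obtain \<epsilon> where \<epsilon>: "\<epsilon> \<longlonglongrightarrow> 0" "\<And>k. 0 \<le> \<epsilon> k"
    and close: "\<forall>\<^sub>F k in sequentially. AE t in restrict_space lborel {0<..<T}.
                  (\<integral>\<^sup>+ x. ennreal \<bar>bk k x t - b x t\<bar> \<partial>lborel) \<le> ennreal (\<epsilon> k)"
    using conv by (rule esssup_tendsto_0_AE_le) blast
  define bound where "bound k t = 2 * \<epsilon> k / R + 2 * sqrt (\<epsilon> k) * sqrt (L t)" for k t
  have upper: "\<forall>\<^sub>F k in sequentially. (\<integral>\<^sup>+ t \<in> {0<..<T}. e2ennreal (d_R (bk k) b R t) \<partial>lborel)
      \<le> (\<integral>\<^sup>+ t \<in> {0<..<T}. ennreal (bound k t) \<partial>lborel)"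
    using close
  proof eventually_elim
    case (elim k)
    have "AE t in lborel. t \<in> {0<..<T} \<longrightarrow> d_R (bk k) b R t \<le> ereal (bound k t)"
      unfolding bound_def using L_nonneg lip elim \<epsilon>(2) \<open>0 < R\<close>
      by (intro AE_d_R_le[OF bk_L1 b_L1]) (auto simp: AE_restrict_space_iff elim: eventually_mono)
    then show ?case
      by (intro nn_integral_mono_AE)
        (auto split: split_indicator elim!: eventually_mono intro: e2ennreal_mono[THEN order_trans])
  qed
  have lim: "(\<lambda>k. \<integral>\<^sup>+ t \<in> {0<..<T}. ennreal (bound k t) \<partial>lborel) \<longlonglongrightarrow> 0"
    unfolding bound_def
    using \<epsilon> set_integrable_subset[OF L_half _ greaterThanLessThan_subseteq_atLeastAtMost_iff[THEN iffD2]]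
      L_nonneg T_pos \<open>0 < R\<close>
    by (intro set_nn_integral_affine_tendsto_0) (auto intro!: tendsto_eq_intros)
  show "(\<lambda>k. \<integral>\<^sup>+ t \<in> {0<..<T}. e2ennreal (d_R (bk k) b R t) \<partial>lborel) \<longlonglongrightarrow> 0"
    by (rule tendsto_sandwich[OF _ upper tendsto_const lim]) simp
qed

end
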